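(* Let $\Gamma\subseteq\mathit{Aff}(2,\mathbb{H})$ be a subgroup acting freely on $\mathbb{H}^2$. Then for every $A\in\Gamma$, the holonomy part $h(A)$ has $1$ as a right eigenvalue.
   Context: $\mathit{Aff}(2,\mathbb{H})$ is identified with invertible $3\times3$ quaternionic matrices $A=\begin{pmatrix} a&b&r\\ c&d&s\\ 0&0&1\end{pmatrix}$ acting on $(x,y)\in\mathbb{H}^2$ by $(x,y)\mapsto(ax+by+r,cx+dy+s)$. The holonomy part of $A$ is $h(A)=\begin{pmatrix}a&b\\ c&d\end{pmatrix}\in GL(2,\mathbb{H})$. A right eigenvalue of a quaternionic matrix $T$ is $\lambda\in\mathbb{H}$ with $Tv=v\lambda$ for some nonzero $v\in\mathbb{H}^2$. *)

theory Defs
  imports Complex_Main "HOL-Algebra.Group"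
begin

datatype quat = Quat (qre: real) (qi: real) (qj: real) (qk: real)

instantiation quat :: ring_1
begin
definition "0 = Quat 0 0 0 0"
definition "1 = Quat 1 0 0 0"
definition "p + q = Quat (qre p + qre q) (qi p + qi q) (qj p + qj q) (qk p + qk q)"
definition "p - q = Quat (qre p - qre q) (qi p - qi q) (qj p - qj q) (qk p - qk q)"
definition "- q = Quat (- qre q) (- qi q) (- qj q) (- qk q)"
definition "p * q = Quat
   (qre p * qre q - qi p * qi q - qj p * qj q - qk p * qk q)
   (qre p * qi q + qi p * qre q + qj p * qk q - qk p * qj q)
   (qre p * qj q - qi p * qk q + qj p * qre q + qk p * qi q)
   (qre p * qk q + qi p * qj q - qj p * qi q + qk p * qre q)"
instance
  by standard (auto simp: zero_quat_def one_quat_def plus_quat_def minus_quat_def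
      uminus_quat_def times_quat_def algebra_simps intro: quat.expand)
end

text \<open>An element A = [[a,b,r],[c,d,s],[0,0,1]] of quaternionic 3x3 matrices
  of affine shape, acting by (x,y) |-> (a x + b y + r, c x + d y + s).\<close>

record aff2 =
  aa :: quat  ab :: quat  ar :: quat
  ac :: quat  ad :: quat  as :: quat

text \<open>Matrix product of two such 3x3 matrices.\<close>
definition aff_mult :: "aff2 \<Rightarrow> aff2 \<Rightarrow> aff2" where
  "aff_mult A B = \<lparr> aa = aa A * aa B + ab A * ac B, ab = aa A * ab B + ab A * ad B,
                     ar = aa A * ar B + ab A * as B + ar A,
                     ac = ac A * aa B + ad A * ac B, ad = ac A * ab B + ad A * ad B,
                     as = ac A * ar B + ad A * as B + as A \<rparr>"

definition aff_one :: aff2 where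
  "aff_one = \<lparr> aa = 1, ab = 0, ar = 0, ac = 0, ad = 1, as = 0 \<rparr>"

definition aff_monoid :: "aff2 monoid" where
  "aff_monoid = \<lparr> carrier = UNIV, mult = aff_mult, one = aff_one \<rparr>"

definition Aff2H :: "aff2 monoid" where
  "Aff2H = units_of aff_monoid"

definition aff_act :: "aff2 \<Rightarrow> quat \<times> quat \<Rightarrow> quat \<times> quat" where
  "aff_act A p = (aa A * fst p + ab A * snd p + ar A, ac A * fst p + ad A * snd p + as A)"

definition acts_freely :: "aff2 set \<Rightarrow> bool" where
  "acts_freely \<Gamma> \<longleftrightarrow> (\<forall>A\<in>\<Gamma>. \<forall>p. aff_act A p = p \<longrightarrow> A = aff_one)"

record mat2 =
  m11 :: quat  m12 :: quat
  m21 :: quat  m22 :: quat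

definition hol :: "aff2 \<Rightarrow> mat2" where
  "hol A = \<lparr> m11 = aa A, m12 = ab A, m21 = ac A, m22 = ad A \<rparr>"

definition right_eigenvalue :: "mat2 \<Rightarrow> quat \<Rightarrow> bool" where
  "right_eigenvalue T lam \<longleftrightarrow> (\<exists>v1 v2. (v1, v2) \<noteq> (0, 0) \<and>
      m11 T * v1 + m12 T * v2 = v1 * lam \<and> m21 T * v1 + m22 T * v2 = v2 * lam)"

end

theory Submission
  imports Defs
begin

text \<open>If 1 is not a right eigenvalue of the holonomy h(A), then h(A) - I has trivial kernel
  on \<open>\<H>\<^sup>2\<close>; since \<open>\<H>\<close> is a division ring, Gaussian elimination shows that h(A) - I is
  then onto, so the fixed point equation (h(A) - I) p = - t of A = (h(A), t) has a solution.
  Freeness forces A to be the identity, whose holonomy does have the right eigenvalue 1.\<close>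

lemma quat_norm2_pos:
  assumes "q \<noteq> (0::quat)"
  shows "qre q ^ 2 + qi q ^ 2 + qj q ^ 2 + qk q ^ 2 > 0"
proof -
  have "qre q \<noteq> 0 \<or> qi q \<noteq> 0 \<or> qj q \<noteq> 0 \<or> qk q \<noteq> 0"
    using assms by (cases q) (auto simp: zero_quat_def)
  then show ?thesis
    by (smt (verit) power2_less_eq_zero_iff sum_power2_gt_zero_iff zero_eq_power2)
qed

instantiation quat :: division_ring
begin

definition "inverse q = (let n = qre q ^ 2 + qi q ^ 2 + qj q ^ 2 + qk q ^ 2 in
   Quat (qre q / n) (- qi q / n) (- qj q / n) (- qk q / n))"

definition "divide p q = p * inverse (q::quat)"

lemma inverse_quat_mult:
  fixes q :: quat
  assumes "q \<noteq> 0"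
  shows "inverse q * q = 1" and "q * inverse q = 1"
proof -
  obtain w x y z where q: "q = Quat w x y z" by (cases q)
  define n where "n = w\<^sup>2 + x\<^sup>2 + y\<^sup>2 + z\<^sup>2"
  have "n > 0" using quat_norm2_pos[OF assms] by (simp add: q n_def)
  moreover have "inverse q = Quat (w/n) (-x/n) (-y/n) (-z/n)"
    by (simp add: inverse_quat_def q n_def Let_def)
  ultimately show "inverse q * q = 1" "q * inverse q = 1"
    by (simp_all add: q times_quat_def one_quat_def diff_divide_distrib[symmetric]
        add_divide_distrib[symmetric] n_def power2_eq_square algebra_simps)
qed

instance
proof
  show "inverse (0::quat) = 0"
    by (simp add: inverse_quat_def zero_quat_def)
qed (simp_all add: inverse_quat_mult divide_quat_def)

end

lemma lin2_solvable_pivot: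
  fixes a b c d t1 t2 :: "'a::division_ring"
  assumes kernel: "\<And>x y. a * x + b * y = 0 \<Longrightarrow> c * x + d * y = 0 \<Longrightarrow> x = 0 \<and> y = 0"
    and "a \<noteq> 0"
  shows "\<exists>x y. a * x + b * y = t1 \<and> c * x + d * y = t2"
proof -
  \<comment> \<open>Schur complement of the pivot a; if it vanished, (- inverse a * b, 1) would lie in the kernel.\<close>
  define s where "s = d - c * inverse a * b"
  have "s \<noteq> 0"
  proof
    assume "s = 0"
    have "a * - (inverse a * b) + b * 1 = 0"
      using \<open>a \<noteq> 0\<close> by (simp add: mult.assoc[symmetric])
    moreover have "c * - (inverse a * b) + d * 1 = 0"
      using \<open>s = 0\<close> by (simp add: s_def mult.assoc)
    ultimately show False
      using kernel[of "- (inverse a * b)" 1] by simp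
  qed
  define y where "y = inverse s * (t2 - c * inverse a * t1)"
  define x where "x = inverse a * (t1 - b * y)"
  have "a * x + b * y = t1"
    using \<open>a \<noteq> 0\<close> by (simp add: x_def mult.assoc[symmetric])
  moreover have "c * x + d * y = c * inverse a * t1 + s * y"
    by (simp add: x_def s_def algebra_simps)
  then have "c * x + d * y = t2"
    using \<open>s \<noteq> 0\<close> by (simp add: y_def mult.assoc[symmetric])
  ultimately show ?thesis by blast
qed

lemma lin2_solvable_if_trivial_kernel:
  fixes a b c d t1 t2 :: "'a::division_ring"
  assumes kernel: "\<And>x y. a * x + b * y = 0 \<Longrightarrow> c * x + d * y = 0 \<Longrightarrow> x = 0 \<and> y = 0"
  shows "\<exists>x y. a * x + b * y = t1 \<and> c * x + d * y = t2"
proof (cases "a = 0")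
  case False
  then show ?thesis using lin2_solvable_pivot[OF kernel] by blast
next
  case True
  then have "c \<noteq> 0" using kernel[of 1 0] by auto
  have "\<exists>x y. c * x + d * y = t2 \<and> a * x + b * y = t1"
    by (rule lin2_solvable_pivot[OF _ \<open>c \<noteq> 0\<close>]) (use kernel in blast)
  then show ?thesis by blast
qed

lemma aff_fixed_point_if_not_right_eigenvalue_1:
  assumes "\<not> right_eigenvalue (hol A) 1"
  shows "\<exists>p. aff_act A p = p"
proof -
  have kernel: "x = 0 \<and> y = 0"
    if "(aa A - 1) * x + ab A * y = 0" "ac A * x + (ad A - 1) * y = 0" for x y
  proof -
    have "aa A * x + ab A * y = x * 1" "ac A * x + ad A * y = y * 1"
      using that by (simp_all add: algebra_simps)
    then show ?thesis
      using assms unfolding right_eigenvalue_def hol_def by auto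
  qed
  obtain x y where "(aa A - 1) * x + ab A * y = - ar A" "ac A * x + (ad A - 1) * y = - as A"
    using lin2_solvable_if_trivial_kernel[OF kernel] by blast
  then have "aff_act A (x, y) = (x, y)"
    unfolding aff_act_def by (simp add: algebra_simps)
  then show ?thesis ..
qed

lemma right_eigenvalue_hol_aff_one: "right_eigenvalue (hol aff_one) 1"
  unfolding right_eigenvalue_def hol_def aff_one_def
  by (rule exI[of _ 1], rule exI[of _ 0]) simp

theorem mainTheorem6:
  assumes "subgroup \<Gamma> Aff2H"
    and "acts_freely \<Gamma>"
    and "A \<in> \<Gamma>"
  shows "right_eigenvalue (hol A) 1"
proof (rule ccontr)
  assume "\<not> right_eigenvalue (hol A) 1"
  then obtain p where "aff_act A p = p"
    using aff_fixed_point_if_not_right_eigenvalue_1 by blast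
  with assms(2,3) have "A = aff_one"
    unfolding acts_freely_def by blast
  with \<open>\<not> right_eigenvalue (hol A) 1\<close> show False
    using right_eigenvalue_hol_aff_one by simp
qed

end
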